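(* Let $q$ be a query, let $\pi_q$ be a finite ranked list of documents, and for each $d\in\pi_q$ let $\lambda(d|\pi_q)\in\mathbb{R}$ be a fixed weight, $r(d)\in\{0,1\}$ a fixed (deterministic) relevance judgment, and $k(d)$ the position of $d$ in the logged ranked list for $q$. Let $U$ be a finite set of users and $P(\cdot|q)$ a probability distribution on $U$. A session is generated by drawing a user $u\sim P(\cdot|q)$ and then, for each $d\in\pi_q$, a binary examination variable $e(d)\in\{0,1\}$ with $P(e(d)=1\mid u)=P(e(d)=1|k(d),u)$; clicks are $c(d)=e(d)\cdot r(d)$, and $\vec c=(c(d))_{d\in\pi_q}$. Define the user-aware estimator $$\hat{l}_{user\text{-}aware}(S|q,\vec{c})=\sum_{d\in\pi_q}\frac{\lambda(d|\pi_q)\,c(d)}{\sum_{u'\in U}P(e(d)=1|k(d),u')\,P(u'|q)},$$ and the ideal loss $l_{ideal}(S|q)=\sum_{d\in\pi_q}\lambda(d|\pi_q)\,r(d)$. Suppose that for every $d\in\pi_q$ with $r(d)=1$ we have $\sum_{u\in U}P(e(d)=1|k(d),u)P(u|q)>0$. Then $$\mathbb{E}_{u,e}\big[\hat{l}_{user\text{-}aware}(S|q,\vec{c})\big]=l_{ideal}(S|q),$$ where the expectation is over the random user $u$ and the examinations $e$.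
   Context: This is the unbiased-learning-to-rank setting with a position-based examination model personalized per user: each user $u$ examines the document at position $k$ with probability $P(e=1|k,u)$, and a document is clicked iff it is examined and judged relevant (examination hypothesis $c=e\cdot r$). $S$ denotes the ranking model producing $\pi_q$; it enters only through the fixed weights $\lambda(d|\pi_q)$. Convention: a summand whose numerator $c(d)$ is $0$ is taken to be $0$ (relevant only for documents with $r(d)=0$, which are never clicked). *)

theory Defs
  imports "HOL-Probability.Probability"
begin

text \<open>Documents of the ranked list pi_q form the finite set D; lam d is the weight
lambda(d|pi_q) (the only way the ranker S enters); r d in {0,1} the relevance; k d the
logged position; U the finite user set with distribution pU; pe k u = P(e=1|k,u).\<close>

definition clicks :: "('d \<Rightarrow> real) \<Rightarrow> ('d \<Rightarrow> bool) \<Rightarrow> 'd \<Rightarrow> real" where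
  "clicks r e = (\<lambda>d. (if e d then 1 else 0) * r d)"

text \<open>Division by zero is 0 in Isabelle, matching the convention for unclicked documents.\<close>
definition user_aware_est ::
  "'d set \<Rightarrow> ('d \<Rightarrow> real) \<Rightarrow> ('d \<Rightarrow> nat) \<Rightarrow> (nat \<Rightarrow> 'u \<Rightarrow> real) \<Rightarrow> 'u set \<Rightarrow> 'u pmf
   \<Rightarrow> ('d \<Rightarrow> real) \<Rightarrow> real" where
  "user_aware_est D lam k pe U pU c =
     (\<Sum>d\<in>D. lam d * c d / (\<Sum>u'\<in>U. pe (k d) u' * pmf pU u'))"

definition ideal_loss :: "'d set \<Rightarrow> ('d \<Rightarrow> real) \<Rightarrow> ('d \<Rightarrow> real) \<Rightarrow> real" where
  "ideal_loss D lam r = (\<Sum>d\<in>D. lam d * r d)"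

definition session :: "'u pmf \<Rightarrow> ('u \<Rightarrow> ('d \<Rightarrow> bool) pmf) \<Rightarrow> ('u \<times> ('d \<Rightarrow> bool)) pmf" where
  "session pU E = bind_pmf pU (\<lambda>u. map_pmf (\<lambda>e. (u, e)) (E u))"

end

theory Submission
  imports Defs
begin

text \<open>By linearity, the expected estimator is the sum over d of lambda(d) r(d) P(e(d)=1)
divided by the normaliser of d. Averaging the examination probability over the random user
shows that P(e(d)=1) is exactly that normaliser, so every document with r(d)=1 contributes
lambda(d) and every other document contributes nothing.\<close>

lemma measure_bind_pmf:
  "measure_pmf.prob (bind_pmf M N) A = measure_pmf.expectation M (\<lambda>x. measure_pmf.prob (N x) A)"
  unfolding measure_pmf_bind
  by (rule measure_pmf.measure_bind)
    (auto simp: measurable_def space_subprob_algebra measure_pmf.subprob_space_axioms)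

lemma measure_bind_pmf_finite_support:
  assumes "finite U" and "set_pmf M \<subseteq> U" and "\<forall>x\<in>U. measure_pmf.prob (N x) A = p x"
  shows "measure_pmf.prob (bind_pmf M N) A = (\<Sum>x\<in>U. p x * pmf M x)"
proof -
  have "measure_pmf.prob (bind_pmf M N) A = measure_pmf.expectation M p"
    unfolding measure_bind_pmf using assms(2,3)
    by (intro integral_cong_AE) (auto simp: AE_measure_pmf_iff)
  also have "\<dots> = (\<Sum>x\<in>U. p x * pmf M x)"
    using assms(1,2) by (intro integral_measure_pmf_real) auto
  finally show ?thesis .
qed

lemma map_snd_session: "map_pmf snd (session pU E) = bind_pmf pU E"
  by (simp add: session_def map_bind_pmf map_pmf_comp)

lemma expectation_session_examinations:
  fixes f :: "('d \<Rightarrow> bool) \<Rightarrow> real"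
  shows "measure_pmf.expectation (session pU E) (\<lambda>(u, e). f e)
       = measure_pmf.expectation (bind_pmf pU E) f"
  by (simp add: map_snd_session[symmetric] case_prod_beta')

lemma expectation_clicks:
  "measure_pmf.expectation M (\<lambda>e. clicks r e d) = r d * measure_pmf.prob M {e. e d}"
proof -
  have "(\<lambda>e. clicks r e d) = (\<lambda>e. r d * indicator {e. e d} e)"
    by (auto simp: clicks_def)
  then show ?thesis by simp
qed

lemma expectation_user_aware_est:
  assumes "finite D"
  shows "measure_pmf.expectation M (\<lambda>e. user_aware_est D lam k pe U pU (clicks r e))
       = (\<Sum>d\<in>D. lam d * r d * measure_pmf.prob M {e. e d}
                    / (\<Sum>u\<in>U. pe (k d) u * pmf pU u))"
proof -
  have integrable: "integrable (measure_pmf M) (\<lambda>e. clicks r e d)" for d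
    by (rule measure_pmf.integrable_const_bound[where B = "\<bar>r d\<bar>"]) (auto simp: clicks_def)
  have "measure_pmf.expectation M (\<lambda>e. user_aware_est D lam k pe U pU (clicks r e))
      = (\<Sum>d\<in>D. measure_pmf.expectation M
                    (\<lambda>e. lam d * clicks r e d / (\<Sum>u\<in>U. pe (k d) u * pmf pU u)))"
    unfolding user_aware_est_def using integrable by (intro Bochner_Integration.integral_sum) auto
  then show ?thesis
    by (simp add: expectation_clicks mult.assoc)
qed

lemma user_aware_est_unbiased:
  assumes "finite D"
    and "\<forall>d\<in>D. measure_pmf.prob M {e. e d} = (\<Sum>u\<in>U. pe (k d) u * pmf pU u)"
    and "\<forall>d\<in>D. r d \<noteq> 0 \<longrightarrow> (\<Sum>u\<in>U. pe (k d) u * pmf pU u) > 0"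
  shows "measure_pmf.expectation M (\<lambda>e. user_aware_est D lam k pe U pU (clicks r e))
       = ideal_loss D lam r"
  unfolding expectation_user_aware_est[OF assms(1)] ideal_loss_def
  using assms(2,3) by (intro sum.cong refl) force

theorem theorem3p1:
  fixes D :: "'d set" and lam r :: "'d \<Rightarrow> real" and k :: "'d \<Rightarrow> nat"
    and U :: "'u set" and pU :: "'u pmf" and pe :: "nat \<Rightarrow> 'u \<Rightarrow> real"
    and E :: "'u \<Rightarrow> ('d \<Rightarrow> bool) pmf"
  assumes "finite D" and "finite U" and "set_pmf pU \<subseteq> U"
    and "\<forall>d\<in>D. r d \<in> {0, 1}"
    and "\<forall>u\<in>U. \<forall>d\<in>D. measure_pmf.prob (E u) {e. e d} = pe (k d) u"
    and "\<forall>d\<in>D. r d = 1 \<longrightarrow> (\<Sum>u\<in>U. pe (k d) u * pmf pU u) > 0"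
  shows "measure_pmf.expectation (session pU E)
           (\<lambda>(u, e). user_aware_est D lam k pe U pU (clicks r e)) = ideal_loss D lam r"
proof -
  have "\<forall>d\<in>D. measure_pmf.prob (bind_pmf pU E) {e. e d} = (\<Sum>u\<in>U. pe (k d) u * pmf pU u)"
    using assms(2,3,5) by (auto intro: measure_bind_pmf_finite_support)
  moreover have "\<forall>d\<in>D. r d \<noteq> 0 \<longrightarrow> (\<Sum>u\<in>U. pe (k d) u * pmf pU u) > 0"
    using assms(4,6) by auto
  ultimately show ?thesis
    unfolding expectation_session_examinations
    by (rule user_aware_est_unbiased[OF assms(1)])
qed

end
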